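(* For every integer $d\ge1$ there is a constant $C>0$ depending only on $d$ such that the following holds. Let $L\in\mathcal A_d$, $\eta>0$, $m\ge d+2$, and let $z_1,\dots,z_m\in B(L,\eta)$. Then there exist distinct indices $i_1,\dots,i_{d+1}\in\{1,\dots,m\}$ and $H\in\mathcal A_d$ containing $z_{i_1},\dots,z_{i_{d+1}}$ (so that $H$ is their affine hull whenever these $d+1$ points are affinely independent) such that $z_1,\dots,z_m\in B(H,C\eta)$.
   Context: $\mathcal A_d$ denotes the set of $d$-dimensional affine subspaces of $\mathbb R^D$. For $A\subset\mathbb R^D$ and $r>0$, $B(A,r)=\{y\in\mathbb R^D:\inf_{a\in A}\|y-a\|<r\}$ (Euclidean norm). *)

theory Defs
  imports "HOL-Analysis.Analysis"
begin

text \<open>Since the constant C must depend only on d (not on the ambient dimension D),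
  D is an ordinary natural number quantified inside the statement.  Points of R^D are
  represented as functions nat => real vanishing at all coordinates i >= D.\<close>

definition RD :: "nat \<Rightarrow> (nat \<Rightarrow> real) set" where
  "RD D = {x. \<forall>i\<ge>D. x i = 0}"

definition edist :: "nat \<Rightarrow> (nat \<Rightarrow> real) \<Rightarrow> (nat \<Rightarrow> real) \<Rightarrow> real" where
  "edist D x y = sqrt (\<Sum>i<D. (x i - y i)^2)"

definition lin_indep :: "nat \<Rightarrow> (nat \<Rightarrow> nat \<Rightarrow> real) \<Rightarrow> bool" where
  "lin_indep d v = (\<forall>t::nat \<Rightarrow> real. (\<forall>i. (\<Sum>j<d. t j * v j i) = 0) \<longrightarrow> (\<forall>j<d. t j = 0))"

definition aff_subspaces :: "nat \<Rightarrow> nat \<Rightarrow> (nat \<Rightarrow> real) set set" where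
  "aff_subspaces D d = {A. \<exists>p v. p \<in> RD D \<and> (\<forall>j<d. v j \<in> RD D) \<and> lin_indep d v \<and>
      A = {x. \<exists>t::nat \<Rightarrow> real. x = (\<lambda>i. p i + (\<Sum>j<d. t j * v j i))}}"

definition nbhd :: "nat \<Rightarrow> (nat \<Rightarrow> real) set \<Rightarrow> real \<Rightarrow> (nat \<Rightarrow> real) set" where
  "nbhd D A r = {y \<in> RD D. (INF a\<in>A. edist D y a) < r}"

end

theory Submission
  imports Defs "HOL-Library.Function_Algebras" "Jordan_Normal_Form.Determinant"
    "Jordan_Normal_Form.Char_Poly"
begin

(* Write L = {p + \<Sum>j<d. t j * v j} and pick for every z_k a parameter
   T k \<in> R^d with the point of L it describes at distance < \<eta> from z_k.  After an arbitrarily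
   small perturbation (which keeps these distances < \<eta>) the parameters of z_1,...,z_(d+1)
   span a nondegenerate simplex in R^d.  Among all (d+1)-tuples of indices choose one, fs, whose
   parameter simplex has maximal volume |det|.  By Cramer's rule every parameter U k is then an
   affine combination U(fs d) + \<Sum>j<d. x j * (U(fs j) - U(fs d)) with all |x j| \<le> 1, since
   replacing a vertex by U k cannot increase the volume.  Let H be a d-dimensional affine
   subspace containing the points z(fs 0),...,z(fs d); the same combination of these points
   lies in H, and because the parametrisation of L is affine, its distance to z_k is at most
   the combined errors, i.e. < (2d+2)\<eta>. *)

no_notation Finite_Cartesian_Product.vec_nth (infixl "$" 90)


subsection \<open>Euclidean distance and neighbourhoods\<close>

lemma edist_eq_L2_set: "edist D x y = L2_set (\<lambda>i. x i - y i) {..<D}"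
  by (simp add: edist_def L2_set_def)

lemma L2_set_diff_le: "L2_set (\<lambda>i. f i - g i) A \<le> L2_set f A + L2_set g A"
proof -
  have "L2_set (\<lambda>i. f i - g i) A = L2_set (\<lambda>i. f i + (- g i)) A" by simp
  also have "\<dots> \<le> L2_set f A + L2_set (\<lambda>i. - g i) A" by (rule L2_set_triangle_ineq)
  also have "L2_set (\<lambda>i. - g i) A = L2_set g A" by (simp add: L2_set_def)
  finally show ?thesis .
qed

lemma L2_set_sum_le: "L2_set (\<lambda>i. \<Sum>j\<in>J. h j i) A \<le> (\<Sum>j\<in>J. L2_set (h j) A)"
proof (induction J rule: infinite_finite_induct)
  case (insert x F)
  have "L2_set (\<lambda>i. \<Sum>j\<in>insert x F. h j i) A = L2_set (\<lambda>i. h x i + (\<Sum>j\<in>F. h j i)) A"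
    using insert by simp
  also have "\<dots> \<le> L2_set (h x) A + L2_set (\<lambda>i. \<Sum>j\<in>F. h j i) A"
    by (rule L2_set_triangle_ineq)
  also have "\<dots> \<le> L2_set (h x) A + (\<Sum>j\<in>F. L2_set (h j) A)" using insert by simp
  finally show ?case using insert by simp
qed (simp_all add: L2_set_def)

lemma L2_set_scale: "L2_set (\<lambda>i. c * f i) A = \<bar>c\<bar> * L2_set f A"
proof -
  have "L2_set (\<lambda>i. c * f i) A = L2_set (\<lambda>i. \<bar>c\<bar> * f i) A"
    by (simp add: L2_set_def power_mult_distrib)
  also have "\<dots> = \<bar>c\<bar> * L2_set f A" by (rule L2_set_right_distrib[symmetric]) simp
  finally show ?thesis .
qed

lemma nbhd_iff:
  assumes "A \<noteq> {}"
  shows "y \<in> nbhd D A r \<longleftrightarrow> y \<in> RD D \<and> (\<exists>a\<in>A. edist D y a < r)"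
proof -
  have "bdd_below ((\<lambda>a. edist D y a) ` A)"
    by (rule bdd_belowI[of _ 0]) (auto simp: edist_eq_L2_set)
  then show ?thesis using assms by (simp add: nbhd_def cINF_less_iff)
qed


subsection \<open>Parametrised affine subspaces\<close>

definition aff_map :: "nat \<Rightarrow> (nat \<Rightarrow> real) \<Rightarrow> (nat \<Rightarrow> nat \<Rightarrow> real) \<Rightarrow> (nat \<Rightarrow> real) \<Rightarrow> nat \<Rightarrow> real"
  where "aff_map d p v t = (\<lambda>i. p i + (\<Sum>j<d. t j * v j i))"

lemma aff_subspaces_iff:
  "A \<in> aff_subspaces D d \<longleftrightarrow>
     (\<exists>p v. p \<in> RD D \<and> (\<forall>j<d. v j \<in> RD D) \<and> lin_indep d v \<and> A = range (aff_map d p v))"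
  unfolding aff_subspaces_def aff_map_def by (simp add: full_SetCompr_eq)

lemma aff_map_combination:
  assumes "\<forall>l<d. t l = u0 l + (\<Sum>j<n. x j * (u j l - u0 l))"
  shows "aff_map d p v t i
           = aff_map d p v u0 i + (\<Sum>j<n. x j * (aff_map d p v (u j) i - aff_map d p v u0 i))"
proof -
  have diff: "aff_map d p v a i - aff_map d p v b i = (\<Sum>l<d. (a l - b l) * v l i)" for a b
    by (simp add: aff_map_def sum_subtractf[symmetric] left_diff_distrib)
  have "aff_map d p v t i - aff_map d p v u0 i = (\<Sum>l<d. (\<Sum>j<n. x j * (u j l - u0 l)) * v l i)"
    unfolding diff using assms by (intro sum.cong) auto
  also have "\<dots> = (\<Sum>l<d. \<Sum>j<n. x j * ((u j l - u0 l) * v l i))"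
    by (simp add: sum_distrib_right mult.assoc)
  also have "\<dots> = (\<Sum>j<n. \<Sum>l<d. x j * ((u j l - u0 l) * v l i))" by (rule sum.swap)
  also have "\<dots> = (\<Sum>j<n. x j * (aff_map d p v (u j) i - aff_map d p v u0 i))"
    unfolding diff by (simp add: sum_distrib_left)
  finally show ?thesis by (simp add: algebra_simps)
qed

lemma aff_map_shift_dist:
  assumes "j < d"
  shows "edist D z (aff_map d p v (t(j := t j + s)))
           \<le> edist D z (aff_map d p v t) + \<bar>s\<bar> * L2_set (v j) {..<D}"
proof -
  have shift: "aff_map d p v (t(j := t j + s)) i = aff_map d p v t i + s * v j i" for i
  proof -
    have "(\<Sum>l<d. (t(j := t j + s)) l * v l i)
            = (\<Sum>l<d. t l * v l i + (if l = j then s * v j i else 0))"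
      by (rule sum.cong) (auto simp: distrib_right)
    then show ?thesis using assms by (simp add: aff_map_def sum.distrib)
  qed
  have "edist D z (aff_map d p v (t(j := t j + s)))
          = L2_set (\<lambda>i. (z i - aff_map d p v t i) - s * v j i) {..<D}"
    unfolding edist_eq_L2_set shift by (simp add: algebra_simps)
  also have "\<dots> \<le> edist D z (aff_map d p v t) + L2_set (\<lambda>i. s * v j i) {..<D}"
    unfolding edist_eq_L2_set by (rule L2_set_diff_le)
  finally show ?thesis by (simp add: L2_set_scale)
qed


subsection \<open>Linear algebra in the space of real sequences\<close>

interpretation FV: vector_space "\<lambda>(c::real) (f::nat\<Rightarrow>real). (\<lambda>i. c * f i)"
  by unfold_locales (auto simp: fun_eq_iff algebra_simps)

lemma sum_fun_apply: "(\<Sum>x\<in>A. f x) (i::'c) = (\<Sum>x\<in>A. (f x i :: real))"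
  by (induction A rule: infinite_finite_induct) auto

lemma independent_of_lin_indep:
  fixes X :: "nat \<Rightarrow> nat \<Rightarrow> real"
  assumes "lin_indep d X"
  shows "inj_on X {..<d}" "FV.independent (X ` {..<d})"
proof -
  show inj: "inj_on X {..<d}"
  proof (rule inj_onI, rule ccontr)
    fix a b assume ab: "a \<in> {..<d}" "b \<in> {..<d}" "X a = X b" "a \<noteq> b"
    define t where "t = (\<lambda>j. if j = a then (1::real) else if j = b then -1 else 0)"
    have "(\<Sum>j<d. t j * X j i) = 0" for i
    proof -
      have "(\<Sum>j<d. t j * X j i) = (\<Sum>j\<in>{a,b}. t j * X j i)"
        by (rule sum.mono_neutral_right) (use ab in \<open>auto simp: t_def\<close>)
      also have "\<dots> = 0" using ab by (simp add: t_def)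
      finally show ?thesis .
    qed
    with assms have "t a = 0" using ab unfolding lin_indep_def by blast
    then show False by (simp add: t_def)
  qed
  show "FV.independent (X ` {..<d})"
  proof
    assume "FV.dependent (X ` {..<d})"
    then obtain u where u: "\<exists>x\<in>X ` {..<d}. u x \<noteq> 0"
        "(\<Sum>x\<in>X ` {..<d}. (\<lambda>i. u x * x i)) = 0"
      by (subst (asm) FV.dependent_finite) auto
    have "(\<Sum>j<d. u (X j) * X j i) = 0" for i
    proof -
      have "(\<Sum>j<d. u (X j) * X j i) = (\<Sum>x\<in>X ` {..<d}. (\<lambda>i. u x * x i)) i"
        by (simp add: sum_fun_apply sum.reindex[OF inj])
      then show ?thesis using u(2) by simp
    qed
    then have "\<forall>j<d. u (X j) = 0"
      using assms[unfolded lin_indep_def, rule_format, of "\<lambda>j. u (X j)"] by blast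
    with u(1) show False by auto
  qed
qed

lemma lin_indep_of_independent:
  fixes h :: "nat \<Rightarrow> nat \<Rightarrow> real"
  assumes "bij_betw h {..<d} B" "FV.independent B"
  shows "lin_indep d h"
  unfolding lin_indep_def
proof (intro allI impI)
  fix t :: "nat \<Rightarrow> real" and j assume t: "\<forall>i. (\<Sum>j<d. t j * h j i) = 0" and j: "j < d"
  have inj: "inj_on h {..<d}" and B: "h ` {..<d} = B" using assms(1) by (auto simp: bij_betw_def)
  define u where "u = (\<lambda>x. t (inv_into {..<d} h x))"
  have uh: "u (h k) = t k" if "k < d" for k using inj that by (simp add: u_def)
  have "(\<Sum>x\<in>B. (\<lambda>i. u x * x i)) = 0"
  proof
    fix i
    have "(\<Sum>x\<in>B. (\<lambda>i. u x * x i)) i = (\<Sum>k<d. u (h k) * h k i)"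
      unfolding B[symmetric] by (simp add: sum_fun_apply sum.reindex[OF inj])
    also have "\<dots> = (\<Sum>k<d. t k * h k i)" by (rule sum.cong) (auto simp: uh)
    finally show "(\<Sum>x\<in>B. (\<lambda>i. u x * x i)) i = 0 i" using t by simp
  qed
  with assms(2) B have "\<forall>x\<in>B. u x = 0" using FV.dependent_finite by blast
  then show "t j = 0" using uh B j by auto
qed

lemma independent_extension:
  assumes V: "FV.independent V" "finite V" and S: "finite S" "card S \<le> card V"
  shows "\<exists>B. B \<subseteq> S \<union> V \<and> FV.independent B \<and> card B = card V \<and> S \<subseteq> FV.span B"
proof -
  obtain B0 where B0: "B0 \<subseteq> S" "FV.independent B0" "S \<subseteq> FV.span B0"
    using FV.maximal_independent_subset by blast
  obtain B where B: "B0 \<subseteq> B" "B \<subseteq> B0 \<union> V" "FV.independent B" "B0 \<union> V \<subseteq> FV.span B"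
    using FV.maximal_independent_subset_extend[of B0 "B0 \<union> V"] B0(2) by blast
  have finB: "finite B" and finB0: "finite B0"
    using B(2) B0(1) S V by (auto intro: finite_subset)
  have "card V \<le> card B" using FV.independent_span_bound[OF finB V(1)] B(4) by auto
  moreover have "card B0 \<le> card V" using card_mono[OF S(1) B0(1)] S(2) by simp
  moreover have "card (B - B0) = card B - card B0" using B(1) finB0 by (simp add: card_Diff_subset)
  ultimately obtain B1 where B1: "B1 \<subseteq> B - B0" "card B1 = card V - card B0"
    by (metis diff_le_mono obtain_subset_with_card_n)
  show ?thesis
  proof (intro exI conjI)
    show "B0 \<union> B1 \<subseteq> S \<union> V" using B0(1) B1(1) B(2) by auto
    show "FV.independent (B0 \<union> B1)"
      by (rule FV.independent_mono[OF B(3)]) (use B(1) B1(1) in auto)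
    show "card (B0 \<union> B1) = card V" using B1 finB0 finB \<open>card B0 \<le> card V\<close>
      by (subst card_Un_disjoint) (auto intro: finite_subset)
    show "S \<subseteq> FV.span (B0 \<union> B1)" using B0(3) FV.span_mono[of B0 "B0 \<union> B1"] by auto
  qed
qed

lemma lin_indep_extension:
  fixes v w :: "nat \<Rightarrow> nat \<Rightarrow> real"
  assumes v: "lin_indep d v" "\<forall>j<d. v j \<in> RD D" and w: "\<forall>j<d. w j \<in> RD D"
  shows "\<exists>X c. (\<forall>l<d. X l \<in> RD D) \<and> lin_indep d X \<and> (\<forall>j<d. \<forall>i. w j i = (\<Sum>l<d. c j l * X l i))"
proof -
  have cardV: "card (v ` {..<d}) = d"
    using independent_of_lin_indep(1)[OF v(1)] by (simp add: card_image)
  obtain B where B: "B \<subseteq> w ` {..<d} \<union> v ` {..<d}" "FV.independent B" "card B = d"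
      "w ` {..<d} \<subseteq> FV.span B"
    using independent_extension[OF independent_of_lin_indep(2)[OF v(1)], of "w ` {..<d}"]
      cardV card_image_le[of "{..<d}" w] by auto
  then have "finite B" by (metis card.infinite finite_imageI finite_lessThan finite_subset
        finite_UnI card_eq_0_iff)
  then obtain h where h: "bij_betw h {..<d} B"
    using ex_bij_betw_nat_finite B(3) by (metis lessThan_atLeast0)
  then have inj: "inj_on h {..<d}" and hB: "h ` {..<d} = B" by (auto simp: bij_betw_def)
  have "\<exists>c. \<forall>i. w j i = (\<Sum>l<d. c l * h l i)" if j: "j < d" for j
  proof -
    obtain u where u: "(\<Sum>x\<in>B. (\<lambda>i. u x * x i)) = w j"
      using B(4) j FV.span_finite[OF \<open>finite B\<close>] by auto
    have "w j i = (\<Sum>l<d. u (h l) * h l i)" for i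
      using u[symmetric] unfolding hB[symmetric]
      by (simp add: sum_fun_apply sum.reindex[OF inj])
    then show ?thesis by (intro exI[of _ "\<lambda>l. u (h l)"]) blast
  qed
  then obtain c where "\<forall>j<d. \<forall>i. w j i = (\<Sum>l<d. c j l * h l i)" by metis
  moreover have "\<forall>l<d. h l \<in> RD D" using hB B(1) v(2) w by auto
  ultimately show ?thesis using lin_indep_of_independent[OF h B(2)] by blast
qed

lemma affine_subspace_through_points:
  assumes v: "lin_indep d v" "\<forall>j<d. v j \<in> RD D" and q: "\<forall>j\<le>d. q j \<in> RD D"
  shows "\<exists>H\<in>aff_subspaces D d. (\<forall>j\<le>d. q j \<in> H) \<and>
           (\<forall>x. (\<lambda>i. q d i + (\<Sum>j<d. x j * (q j i - q d i))) \<in> H)"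
proof -
  have "\<forall>j<d. (\<lambda>i. q j i - q d i) \<in> RD D" using q by (auto simp: RD_def)
  then obtain X c where X: "\<forall>l<d. X l \<in> RD D" "lin_indep d X"
      and c: "\<forall>j<d. \<forall>i. q j i - q d i = (\<Sum>l<d. c j l * X l i)"
    using lin_indep_extension[OF v, of "\<lambda>j i. q j i - q d i"] by auto
  define H where "H = range (aff_map d (q d) X)"
  have "H \<in> aff_subspaces D d" unfolding H_def aff_subspaces_iff using q X by auto
  moreover have "q j \<in> H" if "j \<le> d" for j
  proof (cases "j = d")
    case True
    then show ?thesis unfolding H_def by (intro range_eqI[of _ _ "\<lambda>_. 0"]) (simp add: aff_map_def)
  next
    case False
    then have "q j = aff_map d (q d) X (c j)" using c that by (auto simp: aff_map_def algebra_simps)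
    then show ?thesis unfolding H_def by simp
  qed
  moreover have "(\<lambda>i. q d i + (\<Sum>j<d. x j * (q j i - q d i))) \<in> H" for x
  proof -
    have "(\<Sum>j<d. x j * (q j i - q d i)) = (\<Sum>l<d. (\<Sum>j<d. x j * c j l) * X l i)" for i
    proof -
      have "(\<Sum>j<d. x j * (q j i - q d i)) = (\<Sum>j<d. \<Sum>l<d. x j * c j l * X l i)"
        using c by (simp add: sum_distrib_left mult.assoc)
      also have "\<dots> = (\<Sum>l<d. (\<Sum>j<d. x j * c j l) * X l i)"
        by (subst sum.swap) (simp add: sum_distrib_right)
      finally show ?thesis .
    qed
    then show ?thesis unfolding H_def aff_map_def by auto
  qed
  ultimately show ?thesis by blast
qed


subsection \<open>Simplices in parameter space\<close>

text \<open>The d x d matrix whose columns are the edge vectors U(f j) - U(f d) of the simplex with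
  vertices U(f 0),...,U(f d) in R^d; its |det| is d! times the volume of the simplex.\<close>
definition simplex_mat :: "nat \<Rightarrow> (nat \<Rightarrow> nat \<Rightarrow> real) \<Rightarrow> (nat \<Rightarrow> nat) \<Rightarrow> real mat" where
  "simplex_mat d U f = mat d d (\<lambda>(i, j). U (f j) i - U (f d) i)"

lemma simplex_mat_carrier [simp]: "simplex_mat d U f \<in> carrier_mat d d"
  by (simp add: simplex_mat_def)

lemma simplex_mat_inj:
  assumes "det (simplex_mat d U f) \<noteq> 0"
  shows "inj_on f {0..d}"
proof (rule inj_onI, rule ccontr)
  fix a b assume ab: "a \<in> {0..d}" "b \<in> {0..d}" "f a = f b" "a \<noteq> b"
  let ?A = "simplex_mat d U f"
  have zero_column: "det ?A = 0" if "c < d" "f c = f d" for c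
  proof -
    have "replace_col ?A (?A *\<^sub>v 0\<^sub>v d) c = ?A"
      using that by (intro eq_matI) (auto simp: replace_col_def simplex_mat_def scalar_prod_def)
    then show ?thesis using cramer_lemma_mat[of ?A d "0\<^sub>v d" c] that by simp
  qed
  consider "a < d" "b < d" | "a = d" | "b = d" using ab by fastforce
  then have "det ?A = 0"
  proof cases
    case 1
    then show ?thesis using ab
      by (intro det_identical_columns[OF simplex_mat_carrier, of a b]) (auto simp: simplex_mat_def)
  next
    case 2
    then show ?thesis using ab zero_column[of b] by auto
  next
    case 3
    then show ?thesis using ab zero_column[of a] by auto
  qed
  with assms show False by simp
qed

lemma solve_cramer:
  fixes A :: "real mat"
  assumes A: "A \<in> carrier_mat n n" and dA: "det A \<noteq> 0" and b: "b \<in> carrier_vec n"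
  shows "\<exists>x\<in>carrier_vec n. A *\<^sub>v x = b \<and> (\<forall>k<n. det (replace_col A b k) = x $ k * det A)"
proof -
  define x where "x = (1 / det A) \<cdot>\<^sub>v (adj_mat A *\<^sub>v b)"
  have adjA: "adj_mat A \<in> carrier_mat n n" using adj_mat(1)[OF A] .
  have xc: "x \<in> carrier_vec n" using adjA b by (simp add: x_def)
  have "A *\<^sub>v x = (1 / det A) \<cdot>\<^sub>v (A *\<^sub>v (adj_mat A *\<^sub>v b))"
    unfolding x_def by (rule mult_mat_vec[OF A]) (use adjA b in auto)
  also have "A *\<^sub>v (adj_mat A *\<^sub>v b) = (A * adj_mat A) *\<^sub>v b"
    using assoc_mult_mat_vec[OF A adjA b] by simp
  also have "A * adj_mat A = det A \<cdot>\<^sub>m 1\<^sub>m n" by (rule adj_mat(2)[OF A])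
  also have "(1 / det A) \<cdot>\<^sub>v ((det A \<cdot>\<^sub>m 1\<^sub>m n) *\<^sub>v b) = b"
  proof (rule eq_vecI)
    fix i assume "i < dim_vec b"
    then have i: "i < n" using b by simp
    have "((det A \<cdot>\<^sub>m 1\<^sub>m n) *\<^sub>v b) $ i = (\<Sum>j\<in>{0..<n}. det A * (if j = i then 1 else 0) * b $ j)"
      using i b by (auto simp: scalar_prod_def)
    also have "\<dots> = (\<Sum>j\<in>{0..<n}. if i = j then det A * b $ j else 0)" by (rule sum.cong) auto
    also have "\<dots> = det A * b $ i" using i by simp
    finally show "((1 / det A) \<cdot>\<^sub>v ((det A \<cdot>\<^sub>m 1\<^sub>m n) *\<^sub>v b)) $ i = b $ i"
      using i dA by simp
  qed (use b in simp)
  finally have "A *\<^sub>v x = b" .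
  then show ?thesis using cramer_lemma_mat[OF A xc] xc by auto
qed

text \<open>Every square matrix becomes nonsingular after adding an arbitrarily small positive
  multiple of the identity (the characteristic polynomial has finitely many roots).\<close>
lemma det_perturb:
  fixes A0 :: "real mat"
  assumes A0: "A0 \<in> carrier_mat n n" and "\<delta> > 0"
  shows "\<exists>s. 0 < s \<and> s < \<delta> \<and> det (A0 + s \<cdot>\<^sub>m 1\<^sub>m n) \<noteq> 0"
proof -
  define R where "R = {x. poly (char_poly A0) x = 0}"
  have "char_poly A0 \<noteq> 0" using degree_monic_char_poly[OF A0] by auto
  then have "finite R" unfolding R_def by (rule poly_roots_finite)
  moreover have "infinite {0<..<\<delta>}" using assms(2) by simp
  ultimately have "infinite ({0<..<\<delta>} - uminus ` R)" by (simp add: Diff_infinite_finite)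
  then obtain s where "s \<in> {0<..<\<delta>} - uminus ` R" using infinite_imp_nonempty by blast
  then have s: "s \<in> {0<..<\<delta>}" "- s \<notin> R" by (auto simp: image_iff)
  then have "\<not> eigenvalue A0 (- s)" using eigenvalue_root_char_poly[OF A0] unfolding R_def by simp
  then have "det (char_matrix A0 (- s)) \<noteq> 0" using eigenvalue_det[OF A0] by simp
  moreover have "char_matrix A0 (- s) = A0 + s \<cdot>\<^sub>m 1\<^sub>m n" using A0 by (simp add: char_matrix_def)
  ultimately show ?thesis using s(1) by auto
qed

text \<open>Maximal volume simplex: if some simplex with vertices among the points U k (k \<in> K) is
  nondegenerate, choose one of maximal volume.  Then every point U k is the affine combination
  U(fs d) + \<Sum>j<d. x j * (U(fs j) - U(fs d)) with |x j| \<le> 1: by Cramer's rule |x j| is the ratio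
  of the volume of the simplex with the j-th vertex replaced by U k to the maximal one.\<close>
lemma max_volume_simplex:
  assumes K: "finite K" and f0: "f0 \<in> {0..d} \<rightarrow>\<^sub>E K" "det (simplex_mat d U f0) \<noteq> 0"
  shows "\<exists>fs\<in>{0..d} \<rightarrow>\<^sub>E K. det (simplex_mat d U fs) \<noteq> 0 \<and>
           (\<forall>k\<in>K. \<exists>x. (\<forall>j<d. \<bar>x j\<bar> \<le> 1) \<and>
              (\<forall>i<d. U k i = U (fs d) i + (\<Sum>j<d. x j * (U (fs j) i - U (fs d) i))))"
proof -
  define F where "F = {0..d} \<rightarrow>\<^sub>E K"
  define vol where "vol f = \<bar>det (simplex_mat d U f)\<bar>" for f
  have "finite (vol ` F)" "vol ` F \<noteq> {}" using K f0(1) by (auto simp: F_def finite_PiE)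
  then have "Max (vol ` F) \<in> vol ` F" by (rule Max_in)
  then obtain fs where fs: "fs \<in> F" "vol fs = Max (vol ` F)" by (metis imageE)
  have max: "vol f \<le> vol fs" if "f \<in> F" for f
    using that fs(2) \<open>finite (vol ` F)\<close> by simp
  have "vol fs > 0" using max[of f0] f0 by (auto simp: F_def vol_def)
  then have det_fs: "det (simplex_mat d U fs) \<noteq> 0" by (simp add: vol_def)
  have "\<exists>x. (\<forall>j<d. \<bar>x j\<bar> \<le> 1) \<and> (\<forall>i<d. U k i = U (fs d) i + (\<Sum>j<d. x j * (U (fs j) i - U (fs d) i)))"
    if k: "k \<in> K" for k
  proof -
    define b where "b = vec d (\<lambda>i. U k i - U (fs d) i)"
    obtain x where x: "x \<in> carrier_vec d" "simplex_mat d U fs *\<^sub>v x = b"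
      and cramer: "\<forall>j<d. det (replace_col (simplex_mat d U fs) b j) = x $ j * det (simplex_mat d U fs)"
      using solve_cramer[OF simplex_mat_carrier det_fs, of b] by (auto simp: b_def)
    have "\<bar>x $ j\<bar> \<le> 1" if j: "j < d" for j
    proof -
      have "fs(j := k) \<in> F" using fs(1) k j by (auto simp: F_def PiE_iff extensional_def)
      moreover have "replace_col (simplex_mat d U fs) b j = simplex_mat d U (fs(j := k))"
        using j by (intro eq_matI) (auto simp: replace_col_def simplex_mat_def b_def)
      then have "det (simplex_mat d U (fs(j := k))) = x $ j * det (simplex_mat d U fs)"
        using cramer j by metis
      then have "vol (fs(j := k)) = \<bar>x $ j\<bar> * vol fs" by (simp add: vol_def abs_mult)
      ultimately show ?thesis using max \<open>vol fs > 0\<close> by fastforce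
    qed
    moreover have "U k i = U (fs d) i + (\<Sum>j<d. x $ j * (U (fs j) i - U (fs d) i))" if i: "i < d" for i
    proof -
      have "(simplex_mat d U fs *\<^sub>v x) $ i = b $ i" using x(2) by simp
      then show ?thesis
        using i x(1) by (simp add: simplex_mat_def b_def scalar_prod_def lessThan_atLeast0 mult.commute)
    qed
    ultimately show ?thesis by (intro exI[of _ "\<lambda>j. x $ j"]) auto
  qed
  then show ?thesis using fs(1) det_fs unfolding F_def by blast
qed


lemma L2_set_combination_le:
  "L2_set (\<lambda>l. a l - b l - (\<Sum>j<n. x j * (c j l - b l))) A
     \<le> L2_set a A + L2_set b A + (\<Sum>j<n. \<bar>x j\<bar> * (L2_set (c j) A + L2_set b A))"
proof -
  have "L2_set (\<lambda>l. a l - b l - (\<Sum>j<n. x j * (c j l - b l))) A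
      \<le> L2_set (\<lambda>l. a l - b l) A + L2_set (\<lambda>l. \<Sum>j<n. x j * (c j l - b l)) A"
    by (rule L2_set_diff_le)
  also have "\<dots> \<le> (L2_set a A + L2_set b A) + (\<Sum>j<n. L2_set (\<lambda>l. x j * (c j l - b l)) A)"
    by (intro add_mono L2_set_diff_le L2_set_sum_le)
  also have "(\<Sum>j<n. L2_set (\<lambda>l. x j * (c j l - b l)) A)
               \<le> (\<Sum>j<n. \<bar>x j\<bar> * (L2_set (c j) A + L2_set b A))"
    by (intro sum_mono) (simp add: L2_set_scale L2_set_diff_le mult_left_mono)
  finally show ?thesis by simp
qed

lemma combination_error:
  assumes close: "\<forall>a\<in>{k, k0} \<union> f ` {..<n}. edist D (z a) (P a) < \<eta>"
    and comb: "\<forall>i. P k i = P k0 i + (\<Sum>j<n. x j * (P (f j) i - P k0 i))"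
    and coeff: "\<forall>j<n. \<bar>x j\<bar> \<le> 1"
  shows "edist D (z k) (\<lambda>i. z k0 i + (\<Sum>j<n. x j * (z (f j) i - z k0 i))) < (2 * real n + 2) * \<eta>"
proof -
  define E where "E a = (\<lambda>i. z a i - P a i)" for a
  have err: "L2_set (E a) {..<D} < \<eta>" if "a \<in> {k, k0} \<union> f ` {..<n}" for a
    using close[rule_format, OF that] by (simp add: E_def edist_eq_L2_set)
  have "(\<Sum>j<n. \<bar>x j\<bar> * (L2_set (E (f j)) {..<D} + L2_set (E k0) {..<D})) \<le> (\<Sum>j<n. 1 * (2 * \<eta>))"
  proof (rule sum_mono)
    fix j assume "j \<in> {..<n}"
    then have "L2_set (E (f j)) {..<D} < \<eta>" "L2_set (E k0) {..<D} < \<eta>" using err by blast+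
    then have "L2_set (E (f j)) {..<D} + L2_set (E k0) {..<D} \<le> 2 * \<eta>" by linarith
    then show "\<bar>x j\<bar> * (L2_set (E (f j)) {..<D} + L2_set (E k0) {..<D}) \<le> 1 * (2 * \<eta>)"
      using coeff \<open>j \<in> {..<n}\<close> by (intro mult_mono) auto
  qed
  moreover have "z k i - (z k0 i + (\<Sum>j<n. x j * (z (f j) i - z k0 i)))
                   = E k i - E k0 i - (\<Sum>j<n. x j * (E (f j) i - E k0 i))" for i
    using comb[rule_format, of i]
    by (simp add: E_def algebra_simps sum_subtractf sum.distrib)
  then have "edist D (z k) (\<lambda>i. z k0 i + (\<Sum>j<n. x j * (z (f j) i - z k0 i)))
               \<le> L2_set (E k) {..<D} + L2_set (E k0) {..<D}
                 + (\<Sum>j<n. \<bar>x j\<bar> * (L2_set (E (f j)) {..<D} + L2_set (E k0) {..<D}))"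
    unfolding edist_eq_L2_set by (simp add: L2_set_combination_le)
  moreover have "L2_set (E k) {..<D} < \<eta>" "L2_set (E k0) {..<D} < \<eta>" using err by auto
  ultimately show ?thesis by (simp add: algebra_simps)
qed


lemma nondegenerate_parameters:
  assumes close: "\<forall>k\<in>K. edist D (z k) (aff_map d p v (T k)) < \<eta>" and K: "{1..d+1} \<subseteq> K"
  shows "\<exists>U. (\<forall>k\<in>K. edist D (z k) (aff_map d p v (U k)) < \<eta>) \<and>
             det (simplex_mat d U (\<lambda>j\<in>{0..d}. j + 1)) \<noteq> 0"
proof -
  define f0 where "f0 = (\<lambda>j\<in>{0..d}. j + 1)"
  define nv where "nv j = L2_set (v j) {..<D}" for j
  define slack where "slack k = \<eta> - edist D (z k) (aff_map d p v (T k))" for k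
  define \<delta> where "\<delta> = Min (insert 1 ((\<lambda>k. slack k / (nv (k - 1) + 1)) ` {1..d}))"
  have nv: "nv j \<ge> 0" for j by (simp add: nv_def)
  have "slack k > 0" if "k \<in> {1..d}" for k
  proof -
    have "k \<in> K" using K that by auto
    then show ?thesis using close by (simp add: slack_def)
  qed
  then have "\<delta> > 0" unfolding \<delta>_def using nv by (subst Min_gr_iff) (auto intro!: divide_pos_pos add_nonneg_pos)
  have \<delta>_le: "\<delta> \<le> slack k / (nv (k - 1) + 1)" if "k \<in> {1..d}" for k
    unfolding \<delta>_def using that by (intro Min_le) auto
  obtain s where s: "0 < s" "s < \<delta>" "det (simplex_mat d T f0 + s \<cdot>\<^sub>m 1\<^sub>m d) \<noteq> 0"
    using det_perturb[OF simplex_mat_carrier \<open>\<delta> > 0\<close>] by blast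
  define U where "U k = (if k \<in> {1..d} then (T k)(k - 1 := T k (k - 1) + s) else T k)" for k
  have "simplex_mat d U f0 = simplex_mat d T f0 + s \<cdot>\<^sub>m 1\<^sub>m d"
    by (intro eq_matI) (auto simp: simplex_mat_def f0_def U_def)
  moreover have "edist D (z k) (aff_map d p v (U k)) < \<eta>" if k: "k \<in> K" for k
  proof (cases "k \<in> {1..d}")
    case True
    have "s < slack k / (nv (k - 1) + 1)" using s(2) \<delta>_le[OF True] by linarith
    moreover have "nv (k - 1) + 1 > 0" using nv[of "k - 1"] by linarith
    ultimately have "s * (nv (k - 1) + 1) < slack k" by (simp add: pos_less_divide_eq)
    moreover have "k - 1 < d" using True by auto
    then have "edist D (z k) (aff_map d p v (U k))
                 \<le> edist D (z k) (aff_map d p v (T k)) + s * nv (k - 1)"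
      using aff_map_shift_dist[of "k - 1" d D "z k" p v "T k" s] True s(1)
      by (simp add: U_def nv_def)
    ultimately show ?thesis using s(1) by (simp add: slack_def algebra_simps)
  qed (use close k in \<open>auto simp: U_def\<close>)
  ultimately show ?thesis using s(3) unfolding f0_def by (intro exI[of _ U]) simp
qed


text \<open>The constant is C = 2d + 2.\<close>
theorem mainTheorem2:
  fixes d :: nat
  assumes "d \<ge> 1"
  shows "\<exists>C>0. \<forall>(D::nat) L (\<eta>::real) (m::nat) (z::nat \<Rightarrow> nat \<Rightarrow> real).
           L \<in> aff_subspaces D d \<longrightarrow> \<eta> > 0 \<longrightarrow> m \<ge> d + 2 \<longrightarrow>
           (\<forall>k\<in>{1..m}. z k \<in> nbhd D L \<eta>) \<longrightarrow>
           (\<exists>I H. I \<subseteq> {1..m} \<and> card I = d + 1 \<and> H \<in> aff_subspaces D d \<and>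
                  (\<forall>k\<in>I. z k \<in> H) \<and> (\<forall>k\<in>{1..m}. z k \<in> nbhd D H (C * \<eta>)))"
proof (intro exI[of _ "2 * real d + 2"] conjI allI impI)
  fix D L \<eta> m and z :: "nat \<Rightarrow> nat \<Rightarrow> real"
  assume L: "L \<in> aff_subspaces D d" and "\<eta> > 0" and m: "m \<ge> d + 2"
    and near: "\<forall>k\<in>{1..m}. z k \<in> nbhd D L \<eta>"
  obtain p v where v: "lin_indep d v" "\<forall>j<d. v j \<in> RD D" and L_eq: "L = range (aff_map d p v)"
    using L by (auto simp: aff_subspaces_iff)
  have zRD: "\<forall>k\<in>{1..m}. z k \<in> RD D" and "\<forall>k\<in>{1..m}. \<exists>t. edist D (z k) (aff_map d p v t) < \<eta>"
    using near by (auto simp: L_eq nbhd_iff)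
  then obtain T where "\<forall>k\<in>{1..m}. edist D (z k) (aff_map d p v (T k)) < \<eta>" by metis
  moreover have "{1..d + 1} \<subseteq> {1..m}" using m by simp
  ultimately obtain U where U: "\<forall>k\<in>{1..m}. edist D (z k) (aff_map d p v (U k)) < \<eta>"
      and nondeg: "det (simplex_mat d U (\<lambda>j\<in>{0..d}. j + 1)) \<noteq> 0"
    by (blast dest: nondegenerate_parameters)
  have f0: "(\<lambda>j\<in>{0..d}. j + 1) \<in> {0..d} \<rightarrow>\<^sub>E {1..m}" using m by auto
  obtain fs where fs: "fs \<in> {0..d} \<rightarrow>\<^sub>E {1..m}" "det (simplex_mat d U fs) \<noteq> 0"
      and coeff: "\<forall>k\<in>{1..m}. \<exists>x. (\<forall>j<d. \<bar>x j\<bar> \<le> 1) \<and>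
                    (\<forall>i<d. U k i = U (fs d) i + (\<Sum>j<d. x j * (U (fs j) i - U (fs d) i)))"
    using max_volume_simplex[OF finite_atLeastAtMost f0 nondeg] by blast
  obtain H where H: "H \<in> aff_subspaces D d" "\<forall>j\<le>d. z (fs j) \<in> H"
      "\<forall>x. (\<lambda>i. z (fs d) i + (\<Sum>j<d. x j * (z (fs j) i - z (fs d) i))) \<in> H"
    using affine_subspace_through_points[OF v, of "\<lambda>j. z (fs j)"] zRD fs(1) by (auto simp: PiE_iff)
  show "\<exists>I H. I \<subseteq> {1..m} \<and> card I = d + 1 \<and> H \<in> aff_subspaces D d \<and>
              (\<forall>k\<in>I. z k \<in> H) \<and> (\<forall>k\<in>{1..m}. z k \<in> nbhd D H ((2 * real d + 2) * \<eta>))"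
  proof (intro exI[of _ "fs ` {0..d}"] exI[of _ H] conjI ballI)
    show "card (fs ` {0..d}) = d + 1" using card_image[OF simplex_mat_inj[OF fs(2)]] by simp
    fix k assume k: "k \<in> {1..m}"
    then obtain x where "\<forall>j<d. \<bar>x j\<bar> \<le> 1"
        "\<forall>i<d. U k i = U (fs d) i + (\<Sum>j<d. x j * (U (fs j) i - U (fs d) i))"
      using coeff by blast
    then have "edist D (z k) (\<lambda>i. z (fs d) i + (\<Sum>j<d. x j * (z (fs j) i - z (fs d) i)))
                 < (2 * real d + 2) * \<eta>"
      using U k fs(1)
      by (intro combination_error[where P = "\<lambda>a. aff_map d p v (U a)"] aff_map_combination allI)
        (auto simp: PiE_iff)
    then show "z k \<in> nbhd D H ((2 * real d + 2) * \<eta>)" using H(1,3) zRD k nbhd_iff by blast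
  qed (use fs H in auto)
qed simp

end
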